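(* For every $d\ge1$, \[ \psi_{-1}^{(d)}(x_1,\,x_1+x_2,\,\dots,\,x_1+\cdots+x_d)=\frac{1}{x_1+\cdots+x_d}\,\bigl(\log(\mathsf{paj})\bigr)^{d}(x_1,\dots,x_d). \]
   Context: Moulds: families $M=(M^m(x_1,\dots,x_m))_{m\ge0}$ of rational functions, with product $(M\times N)^m(x_1,\dots,x_m)=\sum_{k=0}^mM^k(x_1,\dots,x_k)N^{m-k}(x_{k+1},\dots,x_m)$ and unit $1$ (equal to $1$ in length $0$ and $0$ otherwise). $\mathsf{paj}^0=1$ and $\mathsf{paj}^m(x_1,\dots,x_m)=\frac1{x_1(x_1+x_2)\cdots(x_1+\cdots+x_m)}$ for $m\ge1$. $\log(\mathsf{paj}):=\sum_{h\ge1}\frac{(-1)^{h+1}}{h}(\mathsf{paj}-1)^{\times h}$ (powers for the product $\times$; finite in each length). Vines: a bunch of $n$ grapes $g_n$ on labels $\{i,\dots,i+n\}$ is the tree with edges joining the stalk $i$ to each grape $i+1,\dots,i+n$. A vine with $d$ grapes is a sequence $v=g_{n_1}\cdots g_{n_k}$ with $n_j\ge1$, $n_1+\cdots+n_k=d$, giving the rooted tree on $\{0,1,\dots,d\}$ (root $0$) obtained by taking $g_{n_1}$ on $\{0,\dots,n_1\}$ and successively grafting $g_{n_j}$ on labels $\{n_1+\cdots+n_{j-1},\dots,n_1+\cdots+n_j\}$, its stalk being identified with the highest-labelled grape $n_1+\cdots+n_{j-1}$ of the previous vine. Its height is $h(v)=k$. $\mathcal V_d$ is the set of vines with $d$ grapes.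 With $x_0=0$, $x_v=\prod_{(i,j)}(x_j-x_i)$ over edges $(i,j)$ of $v$ with $i<j$. Define $\psi_{-1}^{(d)}(x_1,\dots,x_d)=\sum_{v\in\mathcal V_d}\frac{(-1)^{h(v)+1}}{h(v)}\frac{1}{x_v\,x_d}$. *)

theory Defs
  imports Main
begin

(* A mould over a field 'a: its length-m component is evaluated on a list of
   m arguments (x_1,...,x_m). *)
type_synonym 'a mould = "'a list \<Rightarrow> 'a"

definition mould_one :: "('a::field) mould" where
  "mould_one xs = (if xs = [] then 1 else 0)"

definition mould_mult :: "('a::field) mould \<Rightarrow> 'a mould \<Rightarrow> 'a mould" where
  "mould_mult M N xs = (\<Sum>k = 0..length xs. M (take k xs) * N (drop k xs))"

definition mould_minus :: "('a::field) mould \<Rightarrow> 'a mould \<Rightarrow> 'a mould" where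
  "mould_minus M N xs = M xs - N xs"

fun mould_pow :: "('a::field) mould \<Rightarrow> nat \<Rightarrow> 'a mould" where
  "mould_pow M 0 = mould_one"
| "mould_pow M (Suc h) = mould_mult (mould_pow M h) M"

definition paj :: "('a::field) mould" where
  "paj xs = 1 / (\<Prod>i = 1..length xs. sum_list (take i xs))"

(* log(paj) = sum_{h>=1} (-1)^(h+1)/h (paj - 1)^h ; in length m only h <= m
   contribute since (paj - 1) vanishes in length 0. *)
definition log_paj :: "('a::field) mould" where
  "log_paj xs = (\<Sum>h = 1..length xs.
      ((-1) ^ (h + 1) / of_nat h) * mould_pow (mould_minus paj mould_one) h xs)"

(* A vine with d grapes: the sequence (n_1,...,n_k) of bunch sizes, n_j >= 1,
   summing to d. *)
definition vines :: "nat \<Rightarrow> nat list set" where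
  "vines d = {ns. (\<forall>n\<in>set ns. 1 \<le> n) \<and> sum_list ns = d}"

(* Edges (i,j), i<j, of the rooted tree on {0..d}: the j-th bunch has stalk
   s_j = n_1+...+n_{j-1} and grapes s_j+1,...,s_j+n_j. *)
definition vine_edges :: "nat list \<Rightarrow> (nat \<times> nat) set" where
  "vine_edges ns = (\<Union>j<length ns.
      {(sum_list (take j ns), sum_list (take j ns) + t) | t. 1 \<le> t \<and> t \<le> ns ! j})"

(* x_v with the convention x_0 = 0; arguments are x 1, ..., x d *)
definition vine_x :: "nat list \<Rightarrow> (nat \<Rightarrow> 'a::field) \<Rightarrow> 'a" where
  "vine_x ns x = (\<Prod>(i, j)\<in>vine_edges ns.
      (if j = 0 then 0 else x j) - (if i = 0 then 0 else x i))"

definition psi_m1 :: "nat \<Rightarrow> (nat \<Rightarrow> 'a::field) \<Rightarrow> 'a" where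
  "psi_m1 d x = (\<Sum>v\<in>vines d.
      ((-1) ^ (length v + 1) / of_nat (length v)) * (1 / (vine_x v x * x d)))"

end

theory Submission
  imports Defs
begin

text \<open>
  A vine \<open>v = (n\<^sub>1, \<dots>, n\<^sub>h)\<close> with \<open>d\<close> grapes is a composition of \<open>d\<close> into \<open>h\<close> parts; it cuts
  \<open>(x\<^sub>1, \<dots>, x\<^sub>d)\<close> into consecutive blocks of lengths \<open>n\<^sub>1, \<dots>, n\<^sub>h\<close>. In the partial-sum
  coordinates \<open>X(i) = x\<^sub>1 + \<dots> + x\<^sub>i\<close> the edge \<open>(s, s + t)\<close> of a bunch with stalk \<open>s\<close> contributes
  \<open>X(s + t) - X(s) = x\<^sub>s\<^sub>+\<^sub>1 + \<dots> + x\<^sub>s\<^sub>+\<^sub>t\<close>, so \<open>1 / x\<^sub>v\<close> is the product of \<open>paj\<close> over these blocks.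
  Expanding the mould product, \<open>(paj - 1)\<^sup>h\<close> in length \<open>d\<close> is the sum of the same block
  products over all compositions of \<open>d\<close> into \<open>h\<close> parts (\<open>paj - 1\<close> kills empty blocks).
  Summing with the weights \<open>(-1)\<^sup>h\<^sup>+\<^sup>1 / h\<close> gives the identity; the remaining factor
  \<open>1 / X(d)\<close> is \<open>1 / (x\<^sub>1 + \<dots> + x\<^sub>d)\<close>.
\<close>

fun blocks :: "nat list \<Rightarrow> 'b list \<Rightarrow> 'b list list" where
  "blocks [] xs = []"
| "blocks (n # ns) xs = take n xs # blocks ns (drop n xs)"

definition compositions :: "nat \<Rightarrow> nat \<Rightarrow> nat list set" where
  "compositions h n = {ns. length ns = h \<and> (\<forall>m\<in>set ns. 1 \<le> m) \<and> sum_list ns = n}"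

lemma length_le_sum_list_if_pos: "\<forall>n\<in>set ns. 1 \<le> n \<Longrightarrow> length ns \<le> sum_list ns"
  by (induction ns) auto

lemma finite_compositions: "finite (compositions h n)"
proof (rule finite_subset)
  show "compositions h n \<subseteq> {ns. set ns \<subseteq> {0..n} \<and> length ns = h}"
    unfolding compositions_def using member_le_sum_list by fastforce
  show "finite {ns. set ns \<subseteq> {0..n} \<and> length ns = h}"
    by (rule finite_lists_length_eq) simp
qed

lemma compositions_0: "compositions 0 n = (if n = 0 then {[]} else {})"
  unfolding compositions_def by auto

lemma compositions_Suc:
  "compositions (Suc h) n = (\<lambda>(k, ns). ns @ [n - k]) ` (SIGMA k:{0..<n}. compositions h k)"
proof
  show "compositions (Suc h) n \<subseteq> (\<lambda>(k, ns). ns @ [n - k]) ` (SIGMA k:{0..<n}. compositions h k)"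
  proof
    fix v assume v: "v \<in> compositions (Suc h) n"
    then have "v \<noteq> []"
      by (auto simp: compositions_def)
    then obtain ns m where v_snoc: "v = ns @ [m]"
      by (metis rev_exhaust)
    with v have "(sum_list ns, ns) \<in> (SIGMA k:{0..<n}. compositions h k)"
      and "v = ns @ [n - sum_list ns]"
      unfolding compositions_def by auto
    then show "v \<in> (\<lambda>(k, ns). ns @ [n - k]) ` (SIGMA k:{0..<n}. compositions h k)"
      by (auto intro: image_eqI[where x="(sum_list ns, ns)"])
  qed
  show "(\<lambda>(k, ns). ns @ [n - k]) ` (SIGMA k:{0..<n}. compositions h k) \<subseteq> compositions (Suc h) n"
    unfolding compositions_def by auto
qed

lemma inj_on_snoc_compositions:
  "inj_on (\<lambda>(k, ns). ns @ [n - k]) (SIGMA k:{0..<n}. compositions h k)"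
  unfolding inj_on_def compositions_def by auto

lemma blocks_append:
  "blocks (ns @ ms) xs = blocks ns xs @ blocks ms (drop (sum_list ns) xs)"
  by (induction ns arbitrary: xs) (auto simp: add.commute)

lemma blocks_take: "sum_list ns \<le> k \<Longrightarrow> blocks ns (take k xs) = blocks ns xs"
proof (induction ns arbitrary: k xs)
  case (Cons n ns)
  then show ?case
    by (simp add: drop_take min_def)
qed simp

lemma Nil_notin_blocks:
  "\<forall>n\<in>set ns. 1 \<le> n \<Longrightarrow> sum_list ns \<le> length xs \<Longrightarrow> [] \<notin> set (blocks ns xs)"
  by (induction ns arbitrary: xs) auto

lemma mould_pow_eq_sum_compositions:
  fixes M :: "'a::field mould"
  assumes "M [] = 0"
  shows "mould_pow M h xs = (\<Sum>ns\<in>compositions h (length xs). prod_list (map M (blocks ns xs)))"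
proof (induction h arbitrary: xs)
  case 0
  show ?case by (simp add: compositions_0 mould_one_def)
next
  case (Suc h)
  let ?n = "length xs"
  let ?P = "\<lambda>ns. prod_list (map M (blocks ns xs))"
  have "mould_pow M (Suc h) xs = (\<Sum>k<?n. mould_pow M h (take k xs) * M (drop k xs))"
    using assms by (simp add: mould_mult_def atLeast0AtMost lessThan_Suc_atMost[symmetric])
  also have "\<dots> = (\<Sum>k<?n. \<Sum>ns\<in>compositions h k. ?P (ns @ [?n - k]))"
  proof (rule sum.cong[OF refl])
    fix k assume "k \<in> {..<?n}"
    moreover have "blocks (ns @ [?n - k]) xs = blocks ns (take k xs) @ [drop k xs]"
      if "ns \<in> compositions h k" for ns
      using that by (simp add: compositions_def blocks_append blocks_take)
    ultimately show "mould_pow M h (take k xs) * M (drop k xs)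
        = (\<Sum>ns\<in>compositions h k. ?P (ns @ [?n - k]))"
      by (simp add: Suc.IH sum_distrib_right)
  qed
  also have "\<dots> = (\<Sum>(k, ns)\<in>(SIGMA k:{0..<?n}. compositions h k). ?P (ns @ [?n - k]))"
    by (simp add: sum.Sigma finite_compositions lessThan_atLeast0)
  also have "\<dots> = (\<Sum>ns\<in>compositions (Suc h) ?n. ?P ns)"
    unfolding compositions_Suc sum.reindex[OF inj_on_snoc_compositions]
    by (simp add: case_prod_unfold)
  finally show ?case .
qed

lemma sum_vines_by_height:
  assumes "1 \<le> d"
  shows "(\<Sum>v\<in>vines d. f v) = (\<Sum>h = 1..d. \<Sum>v\<in>compositions h d. f v)"
proof -
  have "vines d = (\<Union>h\<in>{1..d}. compositions h d)"
  proof (intro equalityI subsetI)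
    fix v assume v: "v \<in> vines d"
    then have "length v \<le> d" and "v \<noteq> []"
      using assms length_le_sum_list_if_pos by (auto simp: vines_def)
    with v show "v \<in> (\<Union>h\<in>{1..d}. compositions h d)"
      by (auto simp: vines_def compositions_def Suc_le_eq)
  qed (auto simp: vines_def compositions_def)
  moreover have "compositions h d \<inter> compositions h' d = {}" if "h \<noteq> h'" for h h'
    using that by (auto simp: compositions_def)
  ultimately show ?thesis
    by (simp add: sum.UNION_disjoint finite_compositions)
qed

lemma vine_edges_Nil: "vine_edges [] = {}"
  by (simp add: vine_edges_def)

lemma vine_edges_Cons:
  "vine_edges (n # ns) = Pair 0 ` {1..n} \<union> (\<lambda>(i, j). (i + n, j + n)) ` vine_edges ns"
proof -
  have "{..<length (n # ns)} = insert 0 (Suc ` {..<length ns})"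
    by (simp add: lessThan_Suc_eq_insert_0)
  then show ?thesis
    unfolding vine_edges_def by (auto simp: image_UN image_iff add.commute)
qed

lemma finite_vine_edges: "finite (vine_edges ns)"
  by (induction ns) (simp_all add: vine_edges_Nil vine_edges_Cons)

lemma vine_edges_le_sum_list: "(i, j) \<in> vine_edges ns \<Longrightarrow> i \<le> j \<and> j \<le> sum_list ns"
  by (induction ns arbitrary: i j) (auto simp: vine_edges_Nil vine_edges_Cons)

lemma inverse_prod_vine_edges_eq_prod_paj:
  fixes ys :: "'a::field list"
  assumes "\<forall>n\<in>set ns. 1 \<le> n" and "sum_list ns = length ys"
  shows "inverse (\<Prod>(i, j)\<in>vine_edges ns. sum_list (take j ys) - sum_list (take i ys))
       = prod_list (map paj (blocks ns ys))"
  using assms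
proof (induction ns arbitrary: ys)
  case Nil
  then show ?case by (simp add: vine_edges_Nil)
next
  case (Cons n ns)
  let ?S = "\<lambda>(i, j). sum_list (take j ys) - sum_list (take i ys)"
  let ?shift = "\<lambda>(i, j). (i + n, j + n)"
  have "1 \<le> n" and "n \<le> length ys"
    using Cons.prems by auto
  then have "Pair 0 ` {1..n} \<inter> ?shift ` vine_edges ns = {}"
    by auto
  then have "prod ?S (vine_edges (n # ns)) = prod ?S (Pair 0 ` {1..n}) * prod ?S (?shift ` vine_edges ns)"
    by (simp add: vine_edges_Cons prod.union_disjoint finite_vine_edges)
  moreover have "prod ?S (Pair 0 ` {1..n}) = (\<Prod>i = 1..length (take n ys). sum_list (take i (take n ys)))"
    using \<open>n \<le> length ys\<close> by (simp add: prod.reindex inj_on_def min_def)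
  moreover have "prod ?S (?shift ` vine_edges ns) = prod (?S \<circ> ?shift) (vine_edges ns)"
    by (rule prod.reindex) (auto simp: inj_on_def)
  moreover have "\<dots> = (\<Prod>(i, j)\<in>vine_edges ns.
      sum_list (take j (drop n ys)) - sum_list (take i (drop n ys)))"
    by (rule prod.cong) (auto simp: take_add add.commute[of _ n])
  ultimately show ?case
    using Cons by (simp add: paj_def inverse_mult_distrib divide_inverse)
qed

lemma inverse_vine_x_partial_sums:
  fixes ys :: "'a::field list"
  assumes "v \<in> vines (length ys)"
  shows "inverse (vine_x v (\<lambda>i. sum_list (take i ys))) = prod_list (map paj (blocks v ys))"
proof -
  have "vine_x v (\<lambda>i. sum_list (take i ys))
      = (\<Prod>(i, j)\<in>vine_edges v. sum_list (take j ys) - sum_list (take i ys))"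
    unfolding vine_x_def by (rule prod.cong) auto
  with assms show ?thesis
    by (simp add: vines_def inverse_prod_vine_edges_eq_prod_paj)
qed

lemma log_paj_eq_sum_compositions:
  "log_paj xs = (\<Sum>h = 1..length xs. ((-1) ^ (h + 1) / of_nat h) *
      (\<Sum>ns\<in>compositions h (length xs). prod_list (map paj (blocks ns xs))))"
proof -
  let ?M = "mould_minus paj mould_one"
  have M_Nil: "?M [] = 0"
    by (simp add: mould_minus_def mould_one_def paj_def)
  have "prod_list (map ?M (blocks ns xs)) = prod_list (map paj (blocks ns xs))"
    if "ns \<in> compositions h (length xs)" for h ns
  proof -
    have "[] \<notin> set (blocks ns xs)"
      using that by (simp add: compositions_def Nil_notin_blocks)
    then show ?thesis
      by (intro arg_cong[where f = prod_list] map_cong) (auto simp: mould_minus_def mould_one_def)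
  qed
  then have "mould_pow ?M h xs
      = (\<Sum>ns\<in>compositions h (length xs). prod_list (map paj (blocks ns xs)))" for h
    by (simp add: mould_pow_eq_sum_compositions[where M = ?M, OF M_Nil])
  then show ?thesis
    unfolding log_paj_def by simp
qed

lemma psi_m1_cong:
  assumes "\<forall>i\<le>d. x i = y i"
  shows "psi_m1 d x = psi_m1 d y"
proof -
  have "vine_x v x = vine_x v y" if "v \<in> vines d" for v
    unfolding vine_x_def
  proof (rule prod.cong)
    fix e assume "e \<in> vine_edges v"
    with that have "fst e \<le> d" "snd e \<le> d"
      using vine_edges_le_sum_list[of "fst e" "snd e" v] by (auto simp: vines_def)
    with assms show "(case e of (i, j) \<Rightarrow> (if j = 0 then 0 else x j) - (if i = 0 then 0 else x i))
        = (case e of (i, j) \<Rightarrow> (if j = 0 then 0 else y j) - (if i = 0 then 0 else y i))"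
      by (simp add: case_prod_unfold)
  qed simp
  with assms show ?thesis
    unfolding psi_m1_def by (simp cong: sum.cong)
qed

lemma psi_m1_partial_sums_eq_log_paj:
  fixes ys :: "'a::field list"
  assumes "ys \<noteq> []"
  shows "psi_m1 (length ys) (\<lambda>i. sum_list (take i ys)) = 1 / sum_list ys * log_paj ys"
proof -
  let ?d = "length ys"
  let ?c = "\<lambda>h. (-1::'a) ^ (h + 1) / of_nat h"
  let ?P = "\<lambda>v. prod_list (map paj (blocks v ys))"
  have "psi_m1 ?d (\<lambda>i. sum_list (take i ys))
      = (\<Sum>v\<in>vines ?d. 1 / sum_list ys * (?c (length v) * ?P v))"
    unfolding psi_m1_def
  proof (rule sum.cong)
    fix v assume "v \<in> vines ?d"
    then show "?c (length v) * (1 / (vine_x v (\<lambda>i. sum_list (take i ys)) * sum_list (take ?d ys)))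
        = 1 / sum_list ys * (?c (length v) * ?P v)"
      by (simp add: inverse_vine_x_partial_sums[symmetric] inverse_mult_distrib divide_inverse)
  qed simp
  also have "\<dots> = (\<Sum>h = 1..?d. \<Sum>v\<in>compositions h ?d. 1 / sum_list ys * (?c (length v) * ?P v))"
    using assms by (simp add: sum_vines_by_height Suc_le_eq)
  also have "\<dots> = 1 / sum_list ys * log_paj ys"
    by (simp add: log_paj_eq_sum_compositions sum_distrib_left compositions_def)
  finally show ?thesis .
qed

lemma sum_list_take_map_upt:
  assumes "i \<le> d"
  shows "sum_list (take i (map x [1..<d + 1])) = (\<Sum>k = 1..i. x k)"
proof -
  have "take i (map x [1..<d + 1]) = map x [1..<i + 1]"
    using assms by (simp add: take_map take_upt del: upt_Suc)
  then show ?thesis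
    by (simp add: interv_sum_list_conv_sum_set_nat atLeastLessThanSuc_atLeastAtMost del: upt_Suc)
qed

theorem theorem2p8:
  fixes d :: nat and x :: "nat \<Rightarrow> 'a::field_char_0"
  assumes "1 \<le> d"
    and "\<forall>i j. 1 \<le> i \<and> i \<le> j \<and> j \<le> d \<longrightarrow> (\<Sum>k = i..j. x k) \<noteq> 0"
  shows "psi_m1 d (\<lambda>i. \<Sum>k = 1..i. x k)
       = (1 / (\<Sum>k = 1..d. x k)) * log_paj (map x [1..<d+1])"
proof -
  let ?ys = "map x [1..<d + 1]"
  have "psi_m1 d (\<lambda>i. \<Sum>k = 1..i. x k) = psi_m1 d (\<lambda>i. sum_list (take i ?ys))"
    by (intro psi_m1_cong allI impI sum_list_take_map_upt[symmetric])
  also have "\<dots> = 1 / sum_list ?ys * log_paj ?ys"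
    using psi_m1_partial_sums_eq_log_paj[of ?ys] assms(1) by simp
  also have "sum_list ?ys = (\<Sum>k = 1..d. x k)"
    using sum_list_take_map_upt[of d d x] by simp
  finally show ?thesis .
qed

end
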